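(* Let $n\ge1$, $m \ge 1$ be integers and $\lambda > 1$, $\sigma > 1$ real numbers, and let $a_\alpha$, $a$, $b$ be as in the context. There is a constant $C > 0$ depending only on $n, m, \lambda, \sigma$ such that for every solution $u$ of the inequality $\sum_{|\alpha| = m} (-1)^m \partial^\alpha a_\alpha(x, u) \ge b(x) |u|^\lambda$ in $\mathbb{R}^n$ the following holds: if $0 < r_1 < r_2$ are real numbers with $r_2 = \sqrt{\sigma}\, r_1$, $J(r_2) \le 2J(r_1)$ and $J(r_1) > 0$, then $$J^{1-\lambda}(r_1) - J^{1-\lambda}(r_2) \ge C \int_{r_1}^{r_2} r^{(m-n)\lambda + n - 1} h(r)\, dr,$$ where $J$ and $h$ are defined in the context.
   Context: For each multi-index $\alpha$ with $|\alpha| = m$, $a_\alpha : \mathbb{R}^n \times \mathbb{R} \to \mathbb{R}$ is a given function and $\partial^\alpha = \partial^{|\alpha|}/\partial x_1^{\alpha_1}\cdots\partial x_n^{\alpha_n}$. The function $b : \mathbb{R}^n \to (0,\infty)$ is positive measurable, and $a : \mathbb{R}^n \to (0,\infty)$ is positive measurable with $|a_\alpha(x,\zeta)| \le a(x)|\zeta|$ for almost all $x$, all $\zeta \in \mathbb{R}$, all $|\alpha|=m$. $B_r$ is the open ball of radius $r$ centered at $0$ in $\mathbb{R}^n$. A solution is a function $u$ with $b|u|^\lambda \in L_{1,loc}(\mathbb{R}^n)$, $a_\alpha(x,u) \in L_{1,loc}(\mathbb{R}^n)$ for all $|\alpha|=m$, and $\int_{\mathbb{R}^n} \sum_{|\alpha|=m}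 a_\alpha(x,u)\partial^\alpha\varphi\,dx \ge \int_{\mathbb{R}^n} b|u|^\lambda \varphi\,dx$ for all non-negative $\varphi \in C_0^\infty(\mathbb{R}^n)$. For $r>0$: $J(r) = \int_{B_r} b(x)|u|^\lambda\,dx$ and $$h(r) = \left( \frac{1}{r^n} \int_{B_{\sqrt{\sigma} r} \setminus B_{r/\sqrt{\sigma}}} a^{\lambda/(\lambda-1)}(x) b^{-1/(\lambda-1)}(x)\,dx \right)^{1-\lambda},$$ with $h(r) = 0$ if the integral equals $\infty$. *)

theory Defs
  imports "HOL-Analysis.Analysis"
begin

definition pd :: "'n::finite \<Rightarrow> (real^'n \<Rightarrow> real) \<Rightarrow> (real^'n \<Rightarrow> real)" where
  "pd i g = (\<lambda>x. frechet_derivative g (at x) (axis i 1))"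

definition smooth_fun :: "(real^'n::finite \<Rightarrow> real) \<Rightarrow> bool" where
  "smooth_fun f \<longleftrightarrow> (\<forall>ds x. (foldr pd ds f) differentiable (at x))"

definition test_fun :: "(real^'n::finite \<Rightarrow> real) \<Rightarrow> bool" where
  "test_fun f \<longleftrightarrow> smooth_fun f \<and> compact (closure {x. f x \<noteq> 0})"

text \<open>Multi-index partial derivative: apply pd i exactly alpha i times for each i
  (order irrelevant for smooth functions).\<close>
definition dalpha :: "('n::finite \<Rightarrow> nat) \<Rightarrow> (real^'n \<Rightarrow> real) \<Rightarrow> (real^'n \<Rightarrow> real)" where
  "dalpha \<alpha> f = foldr pd (SOME ds. \<forall>i. count_list ds i = \<alpha> i) f"

definition mi_order :: "('n::finite \<Rightarrow> nat) \<Rightarrow> nat" where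
  "mi_order \<alpha> = (\<Sum>i\<in>UNIV. \<alpha> i)"

definition loc_integrable :: "(real^'n::finite \<Rightarrow> real) \<Rightarrow> bool" where
  "loc_integrable f \<longleftrightarrow> (\<forall>R>0. set_integrable lebesgue (ball 0 R) f)"

text \<open>Weak solution of sum_{|alpha|=m} (-1)^m D^alpha a_alpha(x,u) >= b |u|^lambda.\<close>
definition is_solution ::
  "nat \<Rightarrow> real \<Rightarrow> (('n::finite \<Rightarrow> nat) \<Rightarrow> real^'n \<Rightarrow> real \<Rightarrow> real) \<Rightarrow> (real^'n \<Rightarrow> real)
     \<Rightarrow> (real^'n \<Rightarrow> real) \<Rightarrow> bool" where
  "is_solution m lam aa b u \<longleftrightarrow>
     loc_integrable (\<lambda>x. b x * \<bar>u x\<bar> powr lam) \<and>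
     (\<forall>\<alpha>. mi_order \<alpha> = m \<longrightarrow> loc_integrable (\<lambda>x. aa \<alpha> x (u x))) \<and>
     (\<forall>\<phi>. test_fun \<phi> \<and> (\<forall>x. \<phi> x \<ge> 0) \<longrightarrow>
        (\<integral>x. (\<Sum>\<alpha> | mi_order \<alpha> = m. aa \<alpha> x (u x) * dalpha \<alpha> \<phi> x) \<partial>lebesgue)
          \<ge> (\<integral>x. b x * \<bar>u x\<bar> powr lam * \<phi> x \<partial>lebesgue))"

definition Jfun :: "(real^'n::finite \<Rightarrow> real) \<Rightarrow> real \<Rightarrow> (real^'n \<Rightarrow> real) \<Rightarrow> real \<Rightarrow> real" where
  "Jfun b lam u r = (LINT x:ball 0 r|lebesgue. b x * \<bar>u x\<bar> powr lam)"

definition hfun :: "(real^'n::finite \<Rightarrow> real) \<Rightarrow> (real^'n \<Rightarrow> real) \<Rightarrow> real \<Rightarrow> real \<Rightarrow> real \<Rightarrow> real" where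
  "hfun a b lam \<sigma> r =
     (let I = (\<integral>\<^sup>+ x \<in> ball 0 (sqrt \<sigma> * r) - ball 0 (r / sqrt \<sigma>).
                 ennreal (a x powr (lam / (lam - 1)) * b x powr (- 1 / (lam - 1))) \<partial>lebesgue)
      in if I = \<infinity> then 0 else (enn2real I / r ^ CARD('n)) powr (1 - lam))"

end

theory Submission
  imports Defs "HOL-Computational_Algebra.Polynomial"
begin

text \<open>Test the inequality with a smooth cutoff \<phi> that equals 1 on B_r1 and vanishes outside
  B_r2. Its derivatives of order m are O(r1^-m) and supported in the annulus A = B_r2 - B_r1, so
  Young's inequality with a free parameter t bounds J(r1) by
  r1^-m (t^\<lambda> (J(r2) - J(r1)) + t^-\<lambda>' I), where I is the integral of
  a^(\<lambda>/(\<lambda>-1)) b^(-1/(\<lambda>-1)) over A. Optimising in t gives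
  J(r1)^\<lambda> \<le> K r1^(-m\<lambda>) (J(r2) - J(r1)) I^(\<lambda>-1), and the mean value theorem together with
  J(r2) \<le> 2 J(r1) turns this into a lower bound for J(r1)^(1-\<lambda>) - J(r2)^(1-\<lambda>).
  Conversely, for r \<in> [r1, r2] the annulus in the definition of h(r) contains A, so
  r^((m-n)\<lambda>+n-1) h(r) \<le> I^(1-\<lambda>) r2^(m\<lambda>-1).\<close>

section \<open>A smooth function class and the cutoff\<close>

text \<open>\<open>flat_exp_deriv k\<close> is the \<open>k\<close>-th derivative of the flat function that is \<open>exp (-1/t)\<close>
  for \<open>t > 0\<close> and \<open>0\<close> otherwise; differentiating \<open>P (1/t) * exp (-1/t)\<close> gives
  \<open>Q (1/t) * exp (-1/t)\<close> with \<open>Q s = s\<^sup>2 * (P s - P' s)\<close>.\<close>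

fun flat_exp_poly :: "nat \<Rightarrow> real poly" where
  "flat_exp_poly 0 = 1"
| "flat_exp_poly (Suc k) = [:0, 0, 1:] * (flat_exp_poly k - pderiv (flat_exp_poly k))"

definition flat_exp_deriv :: "nat \<Rightarrow> real \<Rightarrow> real" where
  "flat_exp_deriv k t = (if t > 0 then poly (flat_exp_poly k) (1/t) * exp (-1/t) else 0)"

lemma poly_inverse_times_exp_tendsto_0:
  "((\<lambda>y. poly p (1/y) * exp (-1/y)) \<longlongrightarrow> (0::real)) (at_right 0)"
proof -
  have "((\<lambda>y. \<Sum>i\<le>degree p. coeff p i * (y ^ i / exp y)) \<longlongrightarrow> (\<Sum>i\<le>degree p. coeff p i * (0::real))) at_top"
    by (intro tendsto_intros tendsto_power_div_exp_0)
  moreover have "(\<lambda>y. \<Sum>i\<le>degree p. coeff p i * (y ^ i / exp y)) = (\<lambda>y. poly p y * exp (-y))"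
    by (auto simp: poly_altdef sum_distrib_right exp_minus sum_divide_distrib field_simps)
  ultimately have "((\<lambda>y. poly p y * exp (-y)) \<longlongrightarrow> 0) at_top"
    by simp
  then show ?thesis
    using filterlim_at_top_to_right[of "\<lambda>y. poly p y * exp (-y)" "nhds 0"]
    by (simp add: inverse_eq_divide)
qed

lemma flat_exp_deriv_has_derivative_0:
  "(flat_exp_deriv k has_real_derivative flat_exp_deriv (Suc k) 0) (at 0)"
proof -
  have left: "((\<lambda>y. (flat_exp_deriv k y - flat_exp_deriv k 0) / (y - 0)) \<longlongrightarrow> 0) (at_left 0)"
    by (rule tendsto_eventually)
       (auto simp: eventually_at_left_field flat_exp_deriv_def intro: exI[of _ "-1"])
  have "\<forall>\<^sub>F y in at_right 0. poly (pCons 0 (flat_exp_poly k)) (1/y) * exp (-1/y)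
          = (flat_exp_deriv k y - flat_exp_deriv k 0) / (y - 0)"
    by (auto simp: eventually_at_right_field flat_exp_deriv_def intro!: exI[of _ 1])
  with poly_inverse_times_exp_tendsto_0
  have right: "((\<lambda>y. (flat_exp_deriv k y - flat_exp_deriv k 0) / (y - 0)) \<longlongrightarrow> 0) (at_right 0)"
    by (rule Lim_transform_eventually)
  from filterlim_split_at[OF left right] have "(flat_exp_deriv k has_real_derivative 0) (at 0)"
    using has_field_derivative_iff by blast
  then show ?thesis
    by (simp add: flat_exp_deriv_def)
qed

lemma flat_exp_deriv_has_derivative:
  "(flat_exp_deriv k has_real_derivative flat_exp_deriv (Suc k) t) (at t)"
proof -
  consider "t > 0" | "t < 0" | "t = 0"
    by linarith
  then show ?thesis
  proof cases
    case 1
    have "((\<lambda>t. poly (flat_exp_poly k) (1/t) * exp (-1/t)) has_real_derivative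
        poly (pderiv (flat_exp_poly k)) (1/t) * (- 1 / t^2) * exp (-1/t)
          + poly (flat_exp_poly k) (1/t) * (exp (-1/t) * (1/t^2))) (at t)"
      using 1 by (auto intro!: derivative_eq_intros DERIV_chain2[OF poly_DERIV]
                       simp: power2_eq_square field_simps)
    moreover have "poly (pderiv (flat_exp_poly k)) (1/t) * (- 1 / t^2) * exp (-1/t)
          + poly (flat_exp_poly k) (1/t) * (exp (-1/t) * (1/t^2)) = flat_exp_deriv (Suc k) t"
      using 1 by (simp add: flat_exp_deriv_def algebra_simps power2_eq_square)
    ultimately have "((\<lambda>t. poly (flat_exp_poly k) (1/t) * exp (-1/t))
        has_real_derivative flat_exp_deriv (Suc k) t) (at t)"
      by simp
    then show ?thesis
      by (rule has_field_derivative_transform_within_open[where S="{0<..}"])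
         (use 1 in \<open>auto simp: flat_exp_deriv_def\<close>)
  next
    case 2
    have "((\<lambda>_. 0) has_real_derivative 0) (at t)"
      by simp
    then have "(flat_exp_deriv k has_real_derivative 0) (at t)"
      by (rule has_field_derivative_transform_within_open[where S="{..<0}"])
         (use 2 in \<open>auto simp: flat_exp_deriv_def\<close>)
    then show ?thesis
      using 2 by (simp add: flat_exp_deriv_def)
  next
    case 3
    then show ?thesis
      using flat_exp_deriv_has_derivative_0 by simp
  qed
qed

definition has_gradient :: "(real^'n::finite \<Rightarrow> real) \<Rightarrow> ('n \<Rightarrow> real^'n \<Rightarrow> real) \<Rightarrow> bool" where
  "has_gradient f D \<longleftrightarrow> (\<forall>x. (f has_derivative (\<lambda>h. \<Sum>i\<in>UNIV. h$i * D i x)) (at x))"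

lemma has_gradient_const: "has_gradient (\<lambda>x. c) (\<lambda>i x. 0)"
  by (simp add: has_gradient_def)

lemma has_gradient_coord: "has_gradient (\<lambda>x::real^'n::finite. x$k) (\<lambda>i x. if i = k then 1 else 0)"
proof -
  have "(\<lambda>h::real^'n. \<Sum>i\<in>UNIV. h$i * (if i = k then 1 else 0)) = (\<lambda>h. h$k)"
    by (auto simp: if_distrib cong: if_cong)
  then show ?thesis
    unfolding has_gradient_def
    by (simp add: bounded_linear_imp_has_derivative bounded_linear_vec_nth)
qed

lemma has_gradient_add:
  assumes "has_gradient f Df" "has_gradient g Dg"
  shows "has_gradient (\<lambda>x. f x + g x) (\<lambda>i x. Df i x + Dg i x)"
  using assms unfolding has_gradient_def
  by (simp add: distrib_left sum.distrib has_derivative_add)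

lemma has_gradient_mult:
  assumes "has_gradient f Df" "has_gradient g Dg"
  shows "has_gradient (\<lambda>x. f x * g x) (\<lambda>i x. f x * Dg i x + Df i x * g x)"
  unfolding has_gradient_def
proof
  fix x
  have "((\<lambda>x. f x * g x) has_derivative
      (\<lambda>h. f x * (\<Sum>i\<in>UNIV. h$i * Dg i x) + (\<Sum>i\<in>UNIV. h$i * Df i x) * g x)) (at x)"
    using assms unfolding has_gradient_def by (intro has_derivative_mult) auto
  moreover have "f x * (\<Sum>i\<in>UNIV. h$i * Dg i x) + (\<Sum>i\<in>UNIV. h$i * Df i x) * g x
      = (\<Sum>i\<in>UNIV. h$i * (f x * Dg i x + Df i x * g x))" for h :: "real^'a"
    unfolding sum_distrib_left sum_distrib_right sum.distrib[symmetric]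
    by (intro sum.cong) (simp_all add: algebra_simps)
  ultimately show "((\<lambda>x. f x * g x) has_derivative
      (\<lambda>h. \<Sum>i\<in>UNIV. h$i * (f x * Dg i x + Df i x * g x))) (at x)"
    by simp
qed

lemma has_gradient_compose:
  assumes "has_gradient f Df" "\<And>x. (g has_real_derivative g' (f x)) (at (f x))"
  shows "has_gradient (\<lambda>x. g (f x)) (\<lambda>i x. Df i x * g' (f x))"
  unfolding has_gradient_def
proof
  fix x
  have "((\<lambda>x. g (f x)) has_derivative (\<lambda>h. (\<Sum>i\<in>UNIV. h$i * Df i x) * g' (f x))) (at x)"
    using assms unfolding has_gradient_def by (intro DERIV_compose_FDERIV) auto
  then show "((\<lambda>x. g (f x)) has_derivative (\<lambda>h. \<Sum>i\<in>UNIV. h$i * (Df i x * g' (f x)))) (at x)"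
    by (simp add: sum_distrib_right mult.assoc)
qed

lemma has_gradient_pd:
  fixes f :: "real^'n::finite \<Rightarrow> real"
  assumes "has_gradient f D"
  shows "pd i f = D i"
proof
  fix x
  have "(f has_derivative (\<lambda>h. \<Sum>j\<in>UNIV. h$j * D j x)) (at x)"
    using assms by (simp add: has_gradient_def)
  then have "frechet_derivative f (at x) = (\<lambda>h. \<Sum>j\<in>UNIV. h$j * D j x)"
    by (rule frechet_derivative_at[symmetric])
  moreover have "(axis i 1 :: real^'n)$j * D j x = (if i = j then D j x else 0)" for j
    by (simp add: axis_def)
  then have "(\<Sum>j\<in>UNIV. (axis i 1 :: real^'n)$j * D j x) = D i x"
    by simp
  ultimately show "pd i f x = D i x"
    by (simp add: pd_def)
qed

lemma has_gradient_differentiable: "has_gradient f D \<Longrightarrow> f differentiable (at x)"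
  unfolding has_gradient_def differentiable_def by blast

text \<open>Closure under partial differentiation gives smoothness of the functions below without
  any general theory of \<open>C\<^sup>\<infinity>\<close> functions.\<close>

inductive_set elem_smooth :: "(real^'n::finite \<Rightarrow> real) set" where
  const: "(\<lambda>x. c) \<in> elem_smooth"
| coord: "(\<lambda>x. x$i) \<in> elem_smooth"
| add: "f \<in> elem_smooth \<Longrightarrow> g \<in> elem_smooth \<Longrightarrow> (\<lambda>x. f x + g x) \<in> elem_smooth"
| mult: "f \<in> elem_smooth \<Longrightarrow> g \<in> elem_smooth \<Longrightarrow> (\<lambda>x. f x * g x) \<in> elem_smooth"
| flat_exp: "f \<in> elem_smooth \<Longrightarrow> (\<lambda>x. flat_exp_deriv k (f x)) \<in> elem_smooth"
| inverse: "f \<in> elem_smooth \<Longrightarrow> (\<forall>x. f x \<noteq> 0) \<Longrightarrow> (\<lambda>x. inverse (f x)) \<in> elem_smooth"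

lemma elem_smooth_has_gradient:
  "f \<in> elem_smooth \<Longrightarrow> \<exists>D. (\<forall>i. D i \<in> elem_smooth) \<and> has_gradient f D"
proof (induction rule: elem_smooth.induct)
  case (const c)
  show ?case
    by (intro exI[of _ "\<lambda>i x. 0"] conjI allI has_gradient_const elem_smooth.const)
next
  case (coord k)
  show ?case
    by (intro exI[of _ "\<lambda>i x. if i = k then 1 else 0"] conjI allI has_gradient_coord elem_smooth.const)
next
  case (add f g)
  then obtain Df Dg where Df: "\<forall>i. Df i \<in> elem_smooth" "has_gradient f Df"
    and Dg: "\<forall>i. Dg i \<in> elem_smooth" "has_gradient g Dg"
    by blast
  have "\<forall>i. (\<lambda>x. Df i x + Dg i x) \<in> elem_smooth"
    using Df(1) Dg(1) by (intro allI elem_smooth.add) auto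
  with has_gradient_add[OF Df(2) Dg(2)] show ?case
    by (intro exI[of _ "\<lambda>i x. Df i x + Dg i x"] conjI)
next
  case (mult f g)
  then obtain Df Dg where Df: "\<forall>i. Df i \<in> elem_smooth" "has_gradient f Df"
    and Dg: "\<forall>i. Dg i \<in> elem_smooth" "has_gradient g Dg"
    by blast
  have "\<forall>i. (\<lambda>x. f x * Dg i x + Df i x * g x) \<in> elem_smooth"
    using mult.hyps Df(1) Dg(1) by (intro allI elem_smooth.add elem_smooth.mult) auto
  with has_gradient_mult[OF Df(2) Dg(2)] show ?case
    by (intro exI[of _ "\<lambda>i x. f x * Dg i x + Df i x * g x"] conjI)
next
  case (flat_exp f k)
  then obtain Df where Df: "\<forall>i. Df i \<in> elem_smooth" "has_gradient f Df"
    by blast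
  have "\<forall>i. (\<lambda>x. Df i x * flat_exp_deriv (Suc k) (f x)) \<in> elem_smooth"
    using flat_exp.hyps Df(1) by (intro allI elem_smooth.mult elem_smooth.flat_exp) auto
  with has_gradient_compose[OF Df(2) flat_exp_deriv_has_derivative] show ?case
    by (intro exI[of _ "\<lambda>i x. Df i x * flat_exp_deriv (Suc k) (f x)"] conjI)
next
  case (inverse f)
  then obtain Df where Df: "\<forall>i. Df i \<in> elem_smooth" "has_gradient f Df"
    by blast
  have "(inverse has_real_derivative (-1) * (inverse (f x) * inverse (f x))) (at (f x))" for x
    using inverse.hyps(2) DERIV_inverse[of "f x"] by (simp add: power2_eq_square)
  note gradient = has_gradient_compose[OF Df(2) this]
  have "(\<lambda>x. inverse (f x)) \<in> elem_smooth"
    using inverse.hyps by (rule elem_smooth.inverse)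
  then have "\<forall>i. (\<lambda>x. Df i x * ((-1) * (inverse (f x) * inverse (f x)))) \<in> elem_smooth"
    using Df(1) by (intro allI elem_smooth.mult elem_smooth.const) auto
  with gradient show ?case
    by (intro exI[of _ "\<lambda>i x. Df i x * ((-1) * (inverse (f x) * inverse (f x)))"] conjI)
qed

lemma elem_smooth_pd: "f \<in> elem_smooth \<Longrightarrow> pd i f \<in> elem_smooth"
  using elem_smooth_has_gradient has_gradient_pd by metis

lemma elem_smooth_differentiable: "f \<in> elem_smooth \<Longrightarrow> f differentiable (at x)"
  using elem_smooth_has_gradient has_gradient_differentiable by blast

lemma elem_smooth_foldr_pd: "f \<in> elem_smooth \<Longrightarrow> foldr pd ds f \<in> elem_smooth"
  by (induction ds) (auto intro: elem_smooth_pd)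

lemma elem_smooth_imp_smooth_fun: "f \<in> elem_smooth \<Longrightarrow> smooth_fun f"
  unfolding smooth_fun_def using elem_smooth_foldr_pd elem_smooth_differentiable by blast

lemma elem_smooth_continuous_on: "f \<in> elem_smooth \<Longrightarrow> continuous_on UNIV f"
  by (intro continuous_at_imp_continuous_on ballI differentiable_imp_continuous_within
      elem_smooth_differentiable)

lemma elem_smooth_borel_measurable:
  assumes "f \<in> elem_smooth"
  shows "f \<in> borel_measurable lebesgue"
proof -
  have "f \<in> borel_measurable lborel"
    using borel_measurable_continuous_onI[OF elem_smooth_continuous_on[OF assms]] by simp
  then show ?thesis
    by (rule measurable_completion)
qed

lemma elem_smooth_inner_self: "(\<lambda>x::real^'n::finite. x \<bullet> x) \<in> elem_smooth"
proof -
  have "(\<lambda>x::real^'n. \<Sum>i\<in>S. x$i * x$i) \<in> elem_smooth" if "finite S" for S :: "'n set"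
    using that
  proof induction
    case empty
    show ?case
      using elem_smooth.const[of 0] by simp
  next
    case (insert j S)
    show ?case
      using elem_smooth.add[OF elem_smooth.mult[OF elem_smooth.coord elem_smooth.coord] insert.IH]
      by (simp add: insert.hyps)
  qed
  then show ?thesis
    by (simp add: inner_vec_def)
qed

lemma foldr_pd_Cons: "foldr pd (i # ds) f x = frechet_derivative (foldr pd ds f) (at x) (axis i 1)"
  by (simp add: pd_def)

lemma foldr_pd_eq_0_if_constant_on:
  assumes "open U" "\<forall>y\<in>U. f y = c" "ds \<noteq> []" "x \<in> U"
  shows "foldr pd ds f x = 0"
  using assms(3,4)
proof (induction ds arbitrary: x)
  case Nil
  then show ?case by simp
next
  case (Cons i ds)
  obtain c' where c': "\<forall>y\<in>U. foldr pd ds f y = c'"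
    using Cons.IH assms(2) by (cases "ds = []") auto
  have "((\<lambda>_. c') has_derivative (\<lambda>_. 0)) (at x)"
    by simp
  then have "(foldr pd ds f has_derivative (\<lambda>_. 0)) (at x)"
    by (rule has_derivative_transform_within_open[OF _ assms(1) Cons.prems(2)]) (use c' in auto)
  then have "frechet_derivative (foldr pd ds f) (at x) = (\<lambda>_. 0)"
    by (rule frechet_derivative_at[symmetric])
  then show ?case
    by (simp only: foldr_pd_Cons)
qed

lemma foldr_pd_compose_scaleR:
  assumes "smooth_fun f"
  shows "foldr pd ds (\<lambda>x. f (s *\<^sub>R x)) = (\<lambda>x. s ^ length ds * foldr pd ds f (s *\<^sub>R x))"
proof (induction ds)
  case Nil
  then show ?case by simp
next
  case (Cons i ds)
  define H where "H = foldr pd ds f"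
  show ?case
  proof
    fix x
    define H' where "H' = frechet_derivative H (at (s *\<^sub>R x))"
    have dH: "(H has_derivative H') (at (s *\<^sub>R x))"
      using assms frechet_derivative_works unfolding H'_def H_def smooth_fun_def by blast
    then have "((\<lambda>x. H (s *\<^sub>R x)) has_derivative (\<lambda>h. H' (s *\<^sub>R h))) (at x)"
      using has_derivative_compose[of "\<lambda>x. s *\<^sub>R x" "\<lambda>h. s *\<^sub>R h"]
      by (simp add: has_derivative_scaleR_right has_derivative_ident)
    then have "((\<lambda>x. s ^ length ds * H (s *\<^sub>R x)) has_derivative
        (\<lambda>h. s ^ length ds * H' (s *\<^sub>R h))) (at x)"
      by (rule has_derivative_mult_right)
    then have fd: "frechet_derivative (\<lambda>x. s ^ length ds * H (s *\<^sub>R x)) (at x)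
        = (\<lambda>h. s ^ length ds * H' (s *\<^sub>R h))"
      by (rule frechet_derivative_at[symmetric])
    have "foldr pd (i # ds) (\<lambda>x. f (s *\<^sub>R x)) x
        = frechet_derivative (\<lambda>x. s ^ length ds * H (s *\<^sub>R x)) (at x) (axis i 1)"
      by (simp only: foldr_pd_Cons Cons.IH H_def)
    also have "\<dots> = s ^ length (i # ds) * H' (axis i 1)"
      by (simp add: fd linear_scale[OF has_derivative_linear[OF dH]])
    also have "H' (axis i 1) = foldr pd (i # ds) f (s *\<^sub>R x)"
      by (simp only: H'_def H_def foldr_pd_Cons)
    finally show "foldr pd (i # ds) (\<lambda>x. f (s *\<^sub>R x)) x
        = s ^ length (i # ds) * foldr pd (i # ds) f (s *\<^sub>R x)" .
  qed
qed

definition mi_list :: "('n::finite \<Rightarrow> nat) \<Rightarrow> 'n list" where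
  "mi_list \<alpha> = (SOME ds. \<forall>i. count_list ds i = \<alpha> i)"

lemma count_list_mi_list:
  fixes \<alpha> :: "'n::finite \<Rightarrow> nat"
  shows "count_list (mi_list \<alpha>) i = \<alpha> i"
proof -
  obtain xs :: "'n list" where xs: "set xs = UNIV" "distinct xs"
    using finite_distinct_list[of "UNIV :: 'n set"] by auto
  have "count_list (replicate n i) j = (if i = j then n else 0)" for n and i j :: 'n
    by (induction n) auto
  then have "distinct ys \<Longrightarrow>
      count_list (concat (map (\<lambda>i. replicate (\<alpha> i) i) ys)) j = (if j \<in> set ys then \<alpha> j else 0)"
    for ys j
    by (induction ys) auto
  then have "\<forall>i. count_list (concat (map (\<lambda>i. replicate (\<alpha> i) i) xs)) i = \<alpha> i"
    using xs by auto
  then have "\<exists>ds. \<forall>i. count_list ds i = \<alpha> i"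
    by (rule exI)
  then show ?thesis
    unfolding mi_list_def by (rule someI_ex[where P = "\<lambda>ds. \<forall>i. count_list ds i = \<alpha> i", THEN spec])
qed

lemma length_mi_list: "length (mi_list \<alpha>) = mi_order \<alpha>"
  using sum_count_set[of "mi_list \<alpha>" UNIV] by (simp add: count_list_mi_list mi_order_def)

lemma dalpha_eq_foldr_pd: "dalpha \<alpha> f = foldr pd (mi_list \<alpha>) f"
  by (simp add: dalpha_def mi_list_def)

lemma flat_exp_deriv_0: "flat_exp_deriv 0 t = (if t > 0 then exp (-1/t) else 0)"
  by (simp add: flat_exp_deriv_def)

text \<open>The smooth step \<open>\<psi> (c - s) / (\<psi> (c - s) + \<psi> (s - 1))\<close> in \<open>s = \<bar>x\<bar>\<^sup>2 / r\<^sup>2\<close>, where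
  \<open>\<psi> = flat_exp_deriv 0\<close>: it is \<open>1\<close> for \<open>s \<le> 1\<close> and \<open>0\<close> for \<open>s \<ge> c\<close>.\<close>

definition cutoff :: "real \<Rightarrow> real \<Rightarrow> real^'n::finite \<Rightarrow> real" where
  "cutoff c r x = flat_exp_deriv 0 (c - x \<bullet> x / r\<^sup>2)
     * inverse (flat_exp_deriv 0 (c - x \<bullet> x / r\<^sup>2) + flat_exp_deriv 0 (x \<bullet> x / r\<^sup>2 - 1))"

lemma cutoff_denominator_pos: "c > 1 \<Longrightarrow> flat_exp_deriv 0 (c - s) + flat_exp_deriv 0 (s - 1) > 0"
  by (cases "s < c"; cases "s > 1") (auto simp: flat_exp_deriv_0 add_pos_nonneg add_nonneg_pos)

lemma cutoff_elem_smooth: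
  assumes "c > 1"
  shows "cutoff c r \<in> elem_smooth"
proof -
  have affine: "(\<lambda>x::real^'n. p + q * (x \<bullet> x)) \<in> elem_smooth" for p q
    by (rule elem_smooth.add[OF elem_smooth.const elem_smooth.mult[OF elem_smooth.const elem_smooth_inner_self]])
  have "cutoff c r = (\<lambda>x::real^'n. flat_exp_deriv 0 (c + (-1/r\<^sup>2) * (x \<bullet> x))
      * inverse (flat_exp_deriv 0 (c + (-1/r\<^sup>2) * (x \<bullet> x)) + flat_exp_deriv 0 (-1 + (1/r\<^sup>2) * (x \<bullet> x))))"
    by (simp add: fun_eq_iff cutoff_def algebra_simps)
  also have "\<dots> \<in> elem_smooth"
  proof (intro elem_smooth.mult elem_smooth.flat_exp affine elem_smooth.inverse elem_smooth.add allI)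
    fix x :: "real^'n"
    show "flat_exp_deriv 0 (c + (-1/r\<^sup>2) * (x \<bullet> x)) + flat_exp_deriv 0 (-1 + (1/r\<^sup>2) * (x \<bullet> x)) \<noteq> 0"
      using cutoff_denominator_pos[OF assms, of "x \<bullet> x / r\<^sup>2"] by (simp add: algebra_simps)
  qed
  finally show ?thesis .
qed

lemma cutoff_nonneg: "c > 1 \<Longrightarrow> cutoff c r x \<ge> 0"
  unfolding cutoff_def using cutoff_denominator_pos[of c "x \<bullet> x / r\<^sup>2"]
  by (simp add: flat_exp_deriv_0)

lemma cutoff_le_1: "c > 1 \<Longrightarrow> cutoff c r x \<le> 1"
  unfolding cutoff_def using cutoff_denominator_pos[of c "x \<bullet> x / r\<^sup>2"]
  by (simp add: flat_exp_deriv_0 field_simps)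

lemma cutoff_eq_1:
  assumes "c > 1" "r > 0" "norm x < r"
  shows "cutoff c r x = 1"
proof -
  have "x \<bullet> x < r\<^sup>2"
    using assms by (simp add: power2_norm_eq_inner[symmetric] power_strict_mono)
  then have "x \<bullet> x / r\<^sup>2 < 1"
    using assms by (simp add: field_simps)
  then show ?thesis
    using assms(1) by (simp add: cutoff_def flat_exp_deriv_0)
qed

lemma cutoff_eq_0:
  assumes "r > 0" "norm x \<ge> sqrt c * r"
  shows "cutoff c r x = 0"
proof (cases "c > 0")
  case True
  have "(sqrt c * r)\<^sup>2 \<le> (norm x)\<^sup>2"
    using assms True by (intro power_mono) auto
  then have "c \<le> x \<bullet> x / r\<^sup>2"
    using assms True by (simp add: power2_norm_eq_inner power_mult_distrib field_simps)
  then show ?thesis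
    by (simp add: cutoff_def flat_exp_deriv_0)
next
  case False
  then show ?thesis
    by (simp add: cutoff_def flat_exp_deriv_0 not_less order.trans[OF _ zero_le_divide_iff[THEN iffD2]])
qed

lemma cutoff_scale: "r > 0 \<Longrightarrow> cutoff c r = (\<lambda>x. cutoff c 1 ((1/r) *\<^sub>R x))"
  by (simp add: fun_eq_iff cutoff_def power2_eq_square field_simps)

lemma test_fun_cutoff:
  assumes "c > 1" "r > 0"
  shows "test_fun (cutoff c r)"
proof -
  have "{x. cutoff c r x \<noteq> 0} \<subseteq> cball 0 (sqrt c * r)"
    using cutoff_eq_0[OF assms(2)] by (force simp: not_le[symmetric])
  then have "closure {x. cutoff c r x \<noteq> 0} \<subseteq> cball 0 (sqrt c * r)"
    by (rule closure_minimal) simp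
  then have "compact (closure {x. cutoff c r x \<noteq> 0})"
    using closed_Int_compact[OF closed_closure compact_cball] by (metis Int_absorb2)
  then show ?thesis
    unfolding test_fun_def using elem_smooth_imp_smooth_fun[OF cutoff_elem_smooth[OF assms(1)]] by blast
qed

lemma dalpha_cutoff_scale:
  assumes "c > 1" "r > 0"
  shows "dalpha \<alpha> (cutoff c r) x = (1/r) ^ mi_order \<alpha> * dalpha \<alpha> (cutoff c 1) ((1/r) *\<^sub>R x)"
  unfolding dalpha_eq_foldr_pd cutoff_scale[OF assms(2)] length_mi_list
    foldr_pd_compose_scaleR[OF elem_smooth_imp_smooth_fun[OF cutoff_elem_smooth[OF assms(1)]]] ..

lemma dalpha_cutoff_eq_0:
  assumes "c > 1" "r > 0" "mi_order \<alpha> \<ge> 1" and x: "norm x < r \<or> norm x > sqrt c * r"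
  shows "dalpha \<alpha> (cutoff c r) x = 0"
proof -
  have ne: "mi_list \<alpha> \<noteq> []"
    using assms(3) length_mi_list[of \<alpha>] by auto
  from x show ?thesis
  proof
    assume "norm x < r"
    then show ?thesis
      using cutoff_eq_1[OF assms(1,2)] ne unfolding dalpha_eq_foldr_pd
      by (intro foldr_pd_eq_0_if_constant_on[where U = "ball 0 r" and c = 1]) auto
  next
    assume "norm x > sqrt c * r"
    moreover have "open {y::real^'n. sqrt c * r < norm y}"
      by (intro open_Collect_less continuous_intros)
    ultimately show ?thesis
      using ne unfolding dalpha_eq_foldr_pd
      by (intro foldr_pd_eq_0_if_constant_on[where c = 0]) (auto intro!: cutoff_eq_0[OF assms(2)])
  qed
qed

lemma sum_dalpha_cutoff_bounded:
  assumes "c > 1" "m \<ge> 1"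
  shows "\<exists>M0>0. \<forall>y::real^'n::finite. (\<Sum>\<alpha> | mi_order \<alpha> = m. \<bar>dalpha \<alpha> (cutoff c 1) y\<bar>) \<le> M0"
proof -
  define S where "S y = (\<Sum>\<alpha> | mi_order \<alpha> = m. \<bar>dalpha \<alpha> (cutoff c 1) y\<bar>)" for y :: "real^'n"
  have "continuous_on UNIV (dalpha \<alpha> (cutoff c 1))" for \<alpha> :: "'n \<Rightarrow> nat"
    unfolding dalpha_eq_foldr_pd
    by (intro elem_smooth_continuous_on elem_smooth_foldr_pd cutoff_elem_smooth assms)
  then have "continuous_on UNIV S"
    unfolding S_def by (intro continuous_intros)
  then have "compact (S ` cball 0 (sqrt c))"
    by (rule compact_continuous_image[OF continuous_on_subset]) auto
  then obtain B where B: "\<forall>z\<in>S ` cball 0 (sqrt c). norm z \<le> B"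
    using compact_imp_bounded bounded_iff by metis
  have "S y \<le> max B 0 + 1" for y
  proof (cases "norm y \<le> sqrt c")
    case True
    then show ?thesis using B by force
  next
    case False
    then have "dalpha \<alpha> (cutoff c 1) y = 0" if "mi_order \<alpha> = m" for \<alpha>
      using assms that by (intro dalpha_cutoff_eq_0) auto
    then have "S y = 0"
      unfolding S_def by simp
    then show ?thesis by simp
  qed
  then show ?thesis
    unfolding S_def by (intro exI[of _ "max B 0 + 1"]) auto
qed

lemma sum_dalpha_cutoff_le:
  fixes x :: "real^'n::finite"
  assumes "c > 1" "r > 0" "m \<ge> 1"
    and M0: "\<forall>y::real^'n. (\<Sum>\<alpha> | mi_order \<alpha> = m. \<bar>dalpha \<alpha> (cutoff c 1) y\<bar>) \<le> M0"
  shows "(\<Sum>\<alpha> | mi_order \<alpha> = m. \<bar>dalpha \<alpha> (cutoff c r) x\<bar>)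
    \<le> indicator (cball 0 (sqrt c * r) - ball 0 r) x * (M0 / r ^ m)"
proof (cases "x \<in> cball 0 (sqrt c * r) - ball 0 r")
  case True
  have "\<bar>dalpha \<alpha> (cutoff c r) x\<bar> = (1/r) ^ m * \<bar>dalpha \<alpha> (cutoff c 1) ((1/r) *\<^sub>R x)\<bar>"
    if "mi_order \<alpha> = m" for \<alpha>
    using dalpha_cutoff_scale[OF assms(1,2), of \<alpha> x] that assms(2) by (simp add: abs_mult)
  then have "(\<Sum>\<alpha> | mi_order \<alpha> = m. \<bar>dalpha \<alpha> (cutoff c r) x\<bar>)
      = (1/r) ^ m * (\<Sum>\<alpha> | mi_order \<alpha> = m. \<bar>dalpha \<alpha> (cutoff c 1) ((1/r) *\<^sub>R x)\<bar>)"
    unfolding sum_distrib_left by (intro sum.cong) auto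
  also have "\<dots> \<le> (1/r) ^ m * M0"
    using M0 assms by (intro mult_left_mono) auto
  finally show ?thesis
    using True by (simp add: field_simps)
next
  case False
  then have "dalpha \<alpha> (cutoff c r) x = 0" if "mi_order \<alpha> = m" for \<alpha>
    using assms that by (intro dalpha_cutoff_eq_0) auto
  then show ?thesis
    using False by simp
qed

section \<open>Elementary inequalities\<close>

lemma young_pointwise:
  fixes a b u t lam :: real
  assumes "a > 0" "b > 0" "t > 0" "lam > 1"
  shows "a * \<bar>u\<bar> \<le> t powr lam / lam * (b * \<bar>u\<bar> powr lam)
           + t powr (- (lam/(lam-1))) / (lam/(lam-1)) * (a powr (lam/(lam-1)) * b powr (- 1 / (lam - 1)))"
proof -
  define q where "q = lam/(lam-1)"
  have q: "q > 1" "1/lam + 1/q = 1"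
    using assms by (simp_all add: q_def field_simps)
  define A where "A = t * b powr (1/lam) * \<bar>u\<bar>"
  define B where "B = (1/t) * a * b powr (- 1/lam)"
  have "A * B = a * \<bar>u\<bar>"
    using assms by (simp add: A_def B_def powr_minus field_simps)
  moreover have "A * B \<le> A powr lam / lam + B powr q / q"
    using assms q by (intro Youngs_inequality) (auto simp: A_def B_def)
  moreover have "A powr lam = t powr lam * (b * \<bar>u\<bar> powr lam)"
    using assms by (simp add: A_def powr_mult powr_powr)
  moreover have "B powr q = t powr (-q) * (a powr q * b powr (- 1 / (lam - 1)))"
    using assms q
    by (simp add: B_def powr_mult powr_powr powr_minus powr_divide inverse_eq_divide q_def field_simps)
  ultimately show ?thesis
    by (simp add: q_def mult_ac)
qed

text \<open>The constant produced by balancing the two terms of \<open>young_pointwise\<close> in \<open>t\<close>.\<close>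

definition young_const :: "real \<Rightarrow> real \<Rightarrow> real" where
  "young_const lam M = (2*M/lam) * (2*M/(lam/(lam-1))) powr (lam-1)"

lemma young_const_pos: "lam > 1 \<Longrightarrow> M > 0 \<Longrightarrow> young_const lam M > 0"
  by (simp add: young_const_def)

lemma young_const_mult:
  assumes "lam > 1" "M > 0" "s > 0"
  shows "young_const lam (M * s) = young_const lam M * s powr lam"
proof -
  have "(2 * (M * s) / (lam / (lam - 1))) powr (lam - 1)
      = (2 * M / (lam / (lam - 1))) powr (lam - 1) * s powr (lam - 1)"
    using assms by (simp add: powr_mult[symmetric] mult_ac)
  moreover have s: "s * s powr (lam-1) = s powr lam"
    using assms by (simp add: powr_mult_base)
  ultimately show ?thesis
    by (simp add: young_const_def mult_ac flip: s)
qed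

lemma young_bound_pos:
  fixes J M D I lam :: real
  assumes "J > 0" "M > 0" "D \<ge> 0" "I \<ge> 0" "lam > 1"
    and bound: "\<And>t. t > 0 \<Longrightarrow> J \<le> M * (t powr lam / lam) * D + M * (t powr (- (lam/(lam-1))) / (lam/(lam-1))) * I"
  shows "I > 0"
proof (rule ccontr)
  assume "\<not> I > 0"
  with assms have "I = 0"
    by simp
  define t where "t = (J * lam / (2 * M * (D + 1))) powr (1/lam)"
  have t: "t > 0" "t powr lam = J * lam / (2 * M * (D + 1))"
    using assms by (simp_all add: t_def powr_powr)
  have "J \<le> M * (t powr lam / lam) * D"
    using bound[OF t(1)] \<open>I = 0\<close> by simp
  also have "\<dots> = J * (D / (2 * (D + 1)))"
  proof -
    have "M * (J * lam / (2 * M * E) / lam) * D = J * (D / (2 * E))" if "E \<noteq> 0" for E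
      using that assms by (simp add: field_simps)
    then show ?thesis
      using assms by (simp add: t(2))
  qed
  finally have "J \<le> J * (D / (2 * (D + 1)))" .
  moreover have "D / (2 * (D + 1)) < 1"
    using assms by (simp add: field_simps)
  ultimately show False
    using \<open>J > 0\<close> by (metis mult.right_neutral mult_strict_left_mono not_le)
qed

lemma young_bound_optimize:
  fixes J M D I lam :: real
  assumes J: "J > 0" and M: "M > 0" and D: "D \<ge> 0" and I: "I > 0" and lam: "lam > 1"
    and bound: "\<And>t. t > 0 \<Longrightarrow> J \<le> M * (t powr lam / lam) * D + M * (t powr (- (lam/(lam-1))) / (lam/(lam-1))) * I"
  shows "J powr lam \<le> young_const lam M * D * I powr (lam-1)"
proof -
  define q where "q = lam/(lam-1)"
  have q: "q > 1" "1 / q * lam = lam - 1"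
    using lam by (simp_all add: q_def field_simps)
  define X where "X = (2*M/q) * I / J"
  have X: "X > 0"
    using assms q by (simp add: X_def)
  define t where "t = X powr (1/q)"
  have t: "t > 0" "t powr (-q) = 1/X" "t powr lam = X powr (lam - 1)"
    using X q by (simp_all only: t_def powr_powr powr_minus) (simp_all add: divide_inverse)
  have half: "M * (t powr (-q) / q) * I = J/2"
    using X q J M I by (simp add: t X_def field_simps)
  have "J \<le> M * (t powr lam / lam) * D + J/2"
    using bound[OF t(1), folded q_def] by (simp only: half)
  then have "J \<le> 2 * M / lam * D * X powr (lam-1)"
    using t(3) by (simp add: field_simps)
  also have "X powr (lam-1) = (2*M/q) powr (lam-1) * I powr (lam-1) / J powr (lam-1)"
    using assms q by (simp add: X_def powr_divide powr_mult)
  finally have "J * J powr (lam-1) \<le> young_const lam M * D * I powr (lam-1)"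
    using J lam by (simp add: young_const_def q_def field_simps)
  moreover have "J * J powr (lam-1) = J powr lam"
    using J by (simp add: powr_mult_base)
  ultimately show ?thesis
    by simp
qed

lemma powr_diff_ge_mean_value:
  fixes J1 J2 lam :: real
  assumes "0 < J1" "J1 \<le> J2" "lam > 1"
  shows "(lam - 1) * J2 powr (-lam) * (J2 - J1) \<le> J1 powr (1-lam) - J2 powr (1-lam)"
proof (cases "J1 = J2")
  case False
  then have "J1 < J2"
    using assms by simp
  then have "\<exists>z>J1. z < J2 \<and>
      J2 powr (1-lam) - J1 powr (1-lam) = (J2 - J1) * ((1-lam) * z powr (1 - lam - 1))"
    using assms(1) by (intro MVT2) (auto intro!: derivative_eq_intros)
  then obtain z where z: "J1 < z" "z < J2"
    "J2 powr (1-lam) - J1 powr (1-lam) = (J2 - J1) * ((1-lam) * z powr (- lam))"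
    by auto
  have "J2 powr (-lam) \<le> z powr (-lam)"
    using z assms by (intro powr_mono2') auto
  then have "(lam - 1) * J2 powr (-lam) * (J2 - J1) \<le> (lam - 1) * z powr (-lam) * (J2 - J1)"
    using \<open>J1 < J2\<close> assms by (intro mult_right_mono mult_left_mono) auto
  then show ?thesis
    using z by (simp add: algebra_simps)
qed simp

lemma decrement_lower_bound:
  fixes J1 J2 K I lam :: real
  assumes J: "0 < J1" "J1 \<le> J2" "J2 \<le> 2 * J1" and lam: "lam > 1" and "K > 0" "I > 0"
    and bound: "J1 powr lam \<le> K * (J2 - J1) * I powr (lam-1)"
  shows "(lam - 1) * 2 powr (-lam) * I powr (1-lam) / K \<le> J1 powr (1-lam) - J2 powr (1-lam)"
proof -
  have "I powr (1-lam) / K \<le> J1 powr (-lam) * (J2 - J1)"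
  proof -
    have "inverse (I powr (lam-1)) / K \<le> inverse (J1 powr lam) * (J2 - J1)"
      using bound assms by (simp add: field_simps)
    then show ?thesis
      by (simp add: powr_minus[symmetric])
  qed
  moreover have "2 powr (-lam) * J1 powr (-lam) \<le> J2 powr (-lam)"
    using J lam powr_mono2'[of "-lam" J2 "2 * J1"] by (simp add: powr_mult)
  then have "(lam - 1) * (2 powr (-lam) * J1 powr (-lam)) * (J2 - J1) \<le> (lam - 1) * J2 powr (-lam) * (J2 - J1)"
    using J lam by (intro mult_right_mono mult_left_mono) auto
  ultimately have "(lam - 1) * 2 powr (-lam) * (I powr (1-lam) / K) \<le> (lam - 1) * J2 powr (-lam) * (J2 - J1)"
    using lam by (smt (verit) mult.assoc mult_left_mono powr_ge_zero)
  with powr_diff_ge_mean_value[OF J(1,2) lam] show ?thesis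
    by simp
qed

lemma ennreal_le_linear_combination:
  fixes J k1 k2 x y :: real
  assumes "k1 \<ge> 0" "k2 \<ge> 0" "x \<ge> 0" "y \<ge> 0"
    and "ennreal J \<le> ennreal k1 * ennreal x + ennreal k2 * ennreal y"
  shows "J \<le> k1 * x + k2 * y"
proof -
  have "ennreal k1 * ennreal x + ennreal k2 * ennreal y = ennreal (k1 * x + k2 * y)"
    using assms(1-4) by (simp add: ennreal_mult ennreal_plus)
  with assms(5) have "ennreal J \<le> ennreal (k1 * x + k2 * y)"
    by simp
  moreover have "0 \<le> k1 * x + k2 * y"
    using assms(1-4) by simp
  ultimately show ?thesis
    by (metis ennreal_le_iff)
qed

section \<open>Estimates for solutions\<close>

definition dual_weight :: "(real^'n::finite \<Rightarrow> real) \<Rightarrow> (real^'n \<Rightarrow> real) \<Rightarrow> real \<Rightarrow> real^'n \<Rightarrow> real" where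
  "dual_weight a b lam x = a x powr (lam / (lam - 1)) * b x powr (- 1 / (lam - 1))"

lemma Jfun_eq_integral:
  "Jfun b lam u r = (\<integral>x. indicator (ball 0 r) x * (b x * \<bar>u x\<bar> powr lam) \<partial>lebesgue)"
  by (simp add: Jfun_def set_lebesgue_integral_def)

lemma integrable_indicator_ball:
  assumes "loc_integrable f" "r > 0"
  shows "integrable lebesgue (\<lambda>x. indicator (ball 0 r) x * f x)"
  using assms by (simp add: loc_integrable_def set_integrable_def)

lemma Jfun_annulus:
  assumes "loc_integrable (\<lambda>x. b x * \<bar>u x\<bar> powr lam)" "0 < r1" "r1 \<le> r2"
  defines "A \<equiv> ball (0::real^'n::finite) r2 - ball 0 r1"
  shows "integrable lebesgue (\<lambda>x. indicator A x * (b x * \<bar>u x\<bar> powr lam))"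
    and "(\<integral>x. indicator A x * (b x * \<bar>u x\<bar> powr lam) \<partial>lebesgue) = Jfun b lam u r2 - Jfun b lam u r1"
proof -
  have eq: "indicator A x * f = indicator (ball 0 r2) x * f - indicator (ball 0 r1) x * f" for x and f :: real
    using assms(3) by (cases "x \<in> ball 0 r1"; cases "x \<in> ball 0 r2") (auto simp: A_def)
  show "integrable lebesgue (\<lambda>x. indicator A x * (b x * \<bar>u x\<bar> powr lam))"
    unfolding eq using assms by (intro Bochner_Integration.integrable_diff integrable_indicator_ball) auto
  show "(\<integral>x. indicator A x * (b x * \<bar>u x\<bar> powr lam) \<partial>lebesgue) = Jfun b lam u r2 - Jfun b lam u r1"
    unfolding eq Jfun_eq_integral using assms
    by (intro Bochner_Integration.integral_diff integrable_indicator_ball) auto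
qed

lemma Jfun_mono:
  assumes "loc_integrable (\<lambda>x. b x * \<bar>u x\<bar> powr lam)" "\<forall>x. b x \<ge> 0" "0 < r1" "r1 \<le> r2"
  shows "Jfun b lam u r1 \<le> Jfun b lam u r2"
proof -
  have "0 \<le> (\<integral>x. indicator (ball 0 r2 - ball 0 r1) x * (b x * \<bar>u x\<bar> powr lam) \<partial>lebesgue)"
    using assms(2) by (intro integral_nonneg_AE) auto
  then show ?thesis
    using Jfun_annulus[OF assms(1,3,4)] by simp
qed

lemma Jfun_diff_eq_nn_integral:
  assumes "loc_integrable (\<lambda>x. b x * \<bar>u x\<bar> powr lam)" "\<forall>x. b x \<ge> 0" "0 < r1" "r1 \<le> r2"
  shows "(\<integral>\<^sup>+x. ennreal (indicator (ball 0 r2 - ball 0 r1) x * (b x * \<bar>u x\<bar> powr lam)) \<partial>lebesgue)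
    = ennreal (Jfun b lam u r2 - Jfun b lam u r1)"
  using nn_integral_eq_integral[OF Jfun_annulus(1)[OF assms(1,3,4)]] Jfun_annulus(2)[OF assms(1,3,4)] assms(2)
  by simp

lemma Jfun_le_integral_mult:
  fixes \<phi> :: "real^'n::finite \<Rightarrow> real"
  assumes "loc_integrable (\<lambda>x. b x * \<bar>u x\<bar> powr lam)" "\<forall>x. b x \<ge> 0" "0 < r1" "0 < r2"
    and "\<phi> \<in> borel_measurable lebesgue" "\<And>x. 0 \<le> \<phi> x" "\<And>x. \<phi> x \<le> 1"
    and "\<And>x. norm x < r1 \<Longrightarrow> \<phi> x = 1" "\<And>x. norm x \<ge> r2 \<Longrightarrow> \<phi> x = 0"
  shows "Jfun b lam u r1 \<le> (\<integral>x. b x * \<bar>u x\<bar> powr lam * \<phi> x \<partial>lebesgue)"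
proof -
  define f where "f x = b x * \<bar>u x\<bar> powr lam" for x
  have int2: "integrable lebesgue (\<lambda>x. indicator (ball 0 r2) x * f x)"
    unfolding f_def by (rule integrable_indicator_ball[OF assms(1,4)])
  have eq: "f x * \<phi> x = indicator (ball 0 r2) x * f x * \<phi> x" for x
    using assms(9)[of x] by (cases "x \<in> ball 0 r2") auto
  have "integrable lebesgue (\<lambda>x. f x * \<phi> x)"
  proof (rule Bochner_Integration.integrable_bound[OF int2])
    show "(\<lambda>x. f x * \<phi> x) \<in> borel_measurable lebesgue"
      unfolding eq by (intro borel_measurable_times borel_measurable_integrable[OF int2] assms(5))
    show "AE x in lebesgue. norm (f x * \<phi> x) \<le> norm (indicator (ball 0 r2) x * f x)"
      using assms(6,7) by (intro AE_I2) (simp add: eq abs_mult mult_left_le)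
  qed
  with integrable_indicator_ball[OF assms(1,3)] show ?thesis
    unfolding Jfun_eq_integral f_def[symmetric]
  proof (rule integral_mono)
    fix x
    show "indicator (ball 0 r1) x * f x \<le> f x * \<phi> x"
      using assms(2) assms(6,8)[of x] by (cases "x \<in> ball 0 r1") (auto simp: f_def)
  qed
qed

lemma ennreal_integral_le_nn_integral_abs:
  fixes g :: "'a \<Rightarrow> real"
  shows "ennreal (integral\<^sup>L M g) \<le> (\<integral>\<^sup>+x. ennreal \<bar>g x\<bar> \<partial>M)"
proof (cases "integrable M g")
  case True
  have "ennreal (integral\<^sup>L M g) \<le> ennreal (norm (integral\<^sup>L M g))"
    by (intro ennreal_leI) simp
  also have "\<dots> \<le> (\<integral>\<^sup>+x. ennreal (norm (g x)) \<partial>M)"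
    by (rule integral_norm_bound_ennreal[OF True])
  finally show ?thesis
    by simp
qed (simp add: not_integrable_integral_eq)

lemma test_integrand_bound:
  fixes aa :: "('n::finite \<Rightarrow> nat) \<Rightarrow> real^'n \<Rightarrow> real \<Rightarrow> real" and x :: "real^'n"
  assumes "lam > 1" "t > 0" "a x > 0" "b x > 0"
    and a_bound: "\<forall>\<alpha> \<zeta>. mi_order \<alpha> = m \<longrightarrow> \<bar>aa \<alpha> x \<zeta>\<bar> \<le> a x * \<bar>\<zeta>\<bar>"
    and "c > 1" "r > 0" "m \<ge> 1"
    and M0: "\<forall>y::real^'n. (\<Sum>\<alpha> | mi_order \<alpha> = m. \<bar>dalpha \<alpha> (cutoff c 1) y\<bar>) \<le> M0"
  shows "\<bar>\<Sum>\<alpha> | mi_order \<alpha> = m. aa \<alpha> x v * dalpha \<alpha> (cutoff c r) x\<bar>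
    \<le> indicator (cball 0 (sqrt c * r) - ball 0 r) x * (M0 / r ^ m) *
       (t powr lam / lam * (b x * \<bar>v\<bar> powr lam)
        + t powr (- (lam/(lam-1))) / (lam/(lam-1)) * dual_weight a b lam x)"
proof -
  define K where "K = indicator (cball 0 (sqrt c * r) - ball 0 r) x * (M0 / r ^ m)"
  have K: "(\<Sum>\<alpha> | mi_order \<alpha> = m. \<bar>dalpha \<alpha> (cutoff c r) x\<bar>) \<le> K"
    unfolding K_def using assms by (intro sum_dalpha_cutoff_le) auto
  then have "K \<ge> 0"
    by (meson order_trans sum_nonneg abs_ge_zero)
  have "\<bar>\<Sum>\<alpha> | mi_order \<alpha> = m. aa \<alpha> x v * dalpha \<alpha> (cutoff c r) x\<bar>
      \<le> (\<Sum>\<alpha> | mi_order \<alpha> = m. \<bar>aa \<alpha> x v\<bar> * \<bar>dalpha \<alpha> (cutoff c r) x\<bar>)"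
    by (rule order_trans[OF sum_abs]) (simp add: abs_mult)
  also have "\<dots> \<le> (\<Sum>\<alpha> | mi_order \<alpha> = m. a x * \<bar>v\<bar> * \<bar>dalpha \<alpha> (cutoff c r) x\<bar>)"
    using a_bound by (intro sum_mono mult_right_mono) auto
  also have "\<dots> \<le> a x * \<bar>v\<bar> * K"
    using K assms(3) by (simp add: sum_distrib_left[symmetric] mult_left_mono)
  also have "\<dots> \<le> (t powr lam / lam * (b x * \<bar>v\<bar> powr lam)
        + t powr (- (lam/(lam-1))) / (lam/(lam-1)) * dual_weight a b lam x) * K"
    using young_pointwise[OF assms(3,4,2,1)] \<open>K \<ge> 0\<close>
    by (intro mult_right_mono) (auto simp: dual_weight_def)
  finally show ?thesis
    by (simp add: K_def mult_ac)
qed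

lemma Jfun_le_integral_test_sum:
  fixes aa :: "('n::finite \<Rightarrow> nat) \<Rightarrow> real^'n \<Rightarrow> real \<Rightarrow> real" and b u :: "real^'n \<Rightarrow> real"
  assumes sol: "is_solution m lam aa b u" and "\<forall>x. b x > 0" "c > 1" "r > 0"
  shows "Jfun b lam u r \<le> (\<integral>x. (\<Sum>\<alpha> | mi_order \<alpha> = m. aa \<alpha> x (u x) * dalpha \<alpha> (cutoff c r) x) \<partial>lebesgue)"
proof -
  have "Jfun b lam u r \<le> (\<integral>x. b x * \<bar>u x\<bar> powr lam * cutoff c r x \<partial>lebesgue)"
    using sol assms(2-4) cutoff_le_1 cutoff_nonneg cutoff_eq_1[OF assms(3,4)]
    by (intro Jfun_le_integral_mult[where ?r2.0 = "sqrt c * r"] elem_smooth_borel_measurable cutoff_elem_smooth)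
       (auto simp: is_solution_def less_imp_le intro: cutoff_eq_0)
  also have "\<dots> \<le> (\<integral>x. (\<Sum>\<alpha> | mi_order \<alpha> = m. aa \<alpha> x (u x) * dalpha \<alpha> (cutoff c r) x) \<partial>lebesgue)"
    using sol test_fun_cutoff[OF assms(3,4)] cutoff_nonneg[OF assms(3), of r]
    unfolding is_solution_def by blast
  finally show ?thesis .
qed

lemma nn_integral_annulus_split:
  fixes a b u :: "real^'n::finite \<Rightarrow> real"
  assumes "loc_integrable (\<lambda>x. b x * \<bar>u x\<bar> powr lam)"
    and "a \<in> borel_measurable lebesgue" "b \<in> borel_measurable lebesgue" "\<forall>x. b x \<ge> 0"
    and "0 < r1" "r1 \<le> r2" "k1 \<ge> 0" "k2 \<ge> 0"
  defines "A \<equiv> ball (0::real^'n) r2 - ball 0 r1"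
  shows "(\<integral>\<^sup>+x. ennreal (indicator A x * (k1 * (b x * \<bar>u x\<bar> powr lam) + k2 * dual_weight a b lam x)) \<partial>lebesgue)
    = ennreal k1 * ennreal (Jfun b lam u r2 - Jfun b lam u r1)
      + ennreal k2 * (\<integral>\<^sup>+x \<in> A. ennreal (dual_weight a b lam x) \<partial>lebesgue)"
proof -
  define f where "f x = indicator A x * (b x * \<bar>u x\<bar> powr lam)" for x
  have "ennreal (indicator A x * (k1 * (b x * \<bar>u x\<bar> powr lam) + k2 * dual_weight a b lam x))
      = ennreal k1 * ennreal (f x) + ennreal k2 * (ennreal (dual_weight a b lam x) * indicator A x)" for x
    using assms(4,7,8) by (simp add: f_def dual_weight_def indicator_def ennreal_plus ennreal_mult)
  moreover have "f \<in> borel_measurable lebesgue"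
    using Jfun_annulus(1)[OF assms(1,5,6)] by (simp add: A_def f_def[abs_def])
  moreover have "dual_weight a b lam \<in> borel_measurable lebesgue"
    unfolding dual_weight_def[abs_def] using assms(2,3) by measurable
  moreover have "A \<in> sets lebesgue"
    by (simp add: A_def)
  ultimately have "(\<integral>\<^sup>+x. ennreal (indicator A x * (k1 * (b x * \<bar>u x\<bar> powr lam) + k2 * dual_weight a b lam x)) \<partial>lebesgue)
      = ennreal k1 * (\<integral>\<^sup>+x. ennreal (f x) \<partial>lebesgue)
        + ennreal k2 * (\<integral>\<^sup>+x \<in> A. ennreal (dual_weight a b lam x) \<partial>lebesgue)"
    by (simp add: nn_integral_add nn_integral_cmult)
  also have "(\<integral>\<^sup>+x. ennreal (f x) \<partial>lebesgue) = ennreal (Jfun b lam u r2 - Jfun b lam u r1)"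
    unfolding f_def A_def by (rule Jfun_diff_eq_nn_integral[OF assms(1,4-6)])
  finally show ?thesis .
qed

lemma cutoff_test_bound:
  fixes aa :: "('n::finite \<Rightarrow> nat) \<Rightarrow> real^'n \<Rightarrow> real \<Rightarrow> real" and a b u :: "real^'n \<Rightarrow> real"
  assumes lam: "lam > 1" and t: "t > 0"
    and a: "a \<in> borel_measurable lebesgue" "\<forall>x. a x > 0"
    and b: "b \<in> borel_measurable lebesgue" "\<forall>x. b x > 0"
    and a_bound: "AE x in lebesgue. \<forall>\<alpha> \<zeta>. mi_order \<alpha> = m \<longrightarrow> \<bar>aa \<alpha> x \<zeta>\<bar> \<le> a x * \<bar>\<zeta>\<bar>"
    and sol: "is_solution m lam aa b u"
    and c: "c > 1" and m: "m \<ge> 1" and r: "0 < r1" "sqrt c * r1 < r2"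
    and M0: "\<forall>y::real^'n. (\<Sum>\<alpha> | mi_order \<alpha> = m. \<bar>dalpha \<alpha> (cutoff c 1) y\<bar>) \<le> M0"
  shows "ennreal (Jfun b lam u r1)
    \<le> ennreal (M0 / r1 ^ m * (t powr lam / lam)) * ennreal (Jfun b lam u r2 - Jfun b lam u r1)
      + ennreal (M0 / r1 ^ m * (t powr (- (lam/(lam-1))) / (lam/(lam-1))))
        * (\<integral>\<^sup>+x \<in> ball 0 r2 - ball 0 r1. ennreal (dual_weight a b lam x) \<partial>lebesgue)"
proof -
  define k1 where "k1 = M0 / r1 ^ m * (t powr lam / lam)"
  define k2 where "k2 = M0 / r1 ^ m * (t powr (- (lam/(lam-1))) / (lam/(lam-1)))"
  define g where "g = (\<lambda>x. \<Sum>\<alpha> | mi_order \<alpha> = m. aa \<alpha> x (u x) * dalpha \<alpha> (cutoff c r1) x)"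
  have "r1 \<le> sqrt c * r1"
    using c r by simp
  then have "r1 \<le> r2"
    using r by linarith
  have "M0 \<ge> 0"
    using M0 by (meson order_trans sum_nonneg abs_ge_zero)
  then have "k1 \<ge> 0" "k2 \<ge> 0"
    using lam t r by (simp_all add: k1_def k2_def)
  have "Jfun b lam u r1 \<le> integral\<^sup>L lebesgue g"
    unfolding g_def by (rule Jfun_le_integral_test_sum[OF sol b(2) c r(1)])
  then have "ennreal (Jfun b lam u r1) \<le> ennreal (integral\<^sup>L lebesgue g)"
    by (rule ennreal_leI)
  also have "\<dots> \<le> (\<integral>\<^sup>+x. ennreal \<bar>g x\<bar> \<partial>lebesgue)"
    by (rule ennreal_integral_le_nn_integral_abs)
  also have "\<dots> \<le> (\<integral>\<^sup>+x. ennreal (indicator (ball 0 r2 - ball 0 r1) x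
      * (k1 * (b x * \<bar>u x\<bar> powr lam) + k2 * dual_weight a b lam x)) \<partial>lebesgue)"
    using a_bound
  proof (intro nn_integral_mono_AE, elim AE_mp, intro AE_I2 impI ennreal_leI)
    fix x
    assume "\<forall>\<alpha> \<zeta>. mi_order \<alpha> = m \<longrightarrow> \<bar>aa \<alpha> x \<zeta>\<bar> \<le> a x * \<bar>\<zeta>\<bar>"
    from test_integrand_bound[where aa = aa and a = a and b = b and x = x and v = "u x",
        OF lam t a(2)[rule_format] b(2)[rule_format] this c r(1) m M0]
    have "\<bar>g x\<bar> \<le> indicator (cball 0 (sqrt c * r1) - ball 0 r1) x
        * (k1 * (b x * \<bar>u x\<bar> powr lam) + k2 * dual_weight a b lam x)"
      by (simp add: g_def k1_def k2_def algebra_simps)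
    also have "\<dots> \<le> indicator (ball 0 r2 - ball 0 r1) x
        * (k1 * (b x * \<bar>u x\<bar> powr lam) + k2 * dual_weight a b lam x)"
      using r b(2) \<open>k1 \<ge> 0\<close> \<open>k2 \<ge> 0\<close>
      by (intro mult_right_mono) (auto simp: indicator_def dual_weight_def less_imp_le)
    finally show "\<bar>g x\<bar> \<le> indicator (ball 0 r2 - ball 0 r1) x
        * (k1 * (b x * \<bar>u x\<bar> powr lam) + k2 * dual_weight a b lam x)" .
  qed
  also have "\<dots> = ennreal k1 * ennreal (Jfun b lam u r2 - Jfun b lam u r1)
      + ennreal k2 * (\<integral>\<^sup>+x \<in> ball 0 r2 - ball 0 r1. ennreal (dual_weight a b lam x) \<partial>lebesgue)"
    using sol a(1) b \<open>r1 \<le> r2\<close> r(1) \<open>k1 \<ge> 0\<close> \<open>k2 \<ge> 0\<close>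
    by (intro nn_integral_annulus_split) (auto simp: is_solution_def less_imp_le)
  finally show ?thesis
    by (simp add: k1_def k2_def)
qed

section \<open>The function h and the main estimate\<close>

lemma annulus_subset_scaled_annulus:
  assumes "\<sigma> > 1" "r1 > 0" "r1 \<le> r" "r \<le> sqrt \<sigma> * r1"
  shows "ball (0::real^'n::finite) (sqrt \<sigma> * r1) - ball 0 r1 \<subseteq> ball 0 (sqrt \<sigma> * r) - ball 0 (r / sqrt \<sigma>)"
proof -
  have "sqrt \<sigma> * r1 \<le> sqrt \<sigma> * r" "r / sqrt \<sigma> \<le> r1"
    using assms by (simp_all add: divide_le_eq mult.commute)
  then show ?thesis
    by auto
qed

lemma hfun_eq_dual_weight:
  fixes a b :: "real^'n::finite \<Rightarrow> real"
  shows "hfun a b lam \<sigma> r =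
     (let I = (\<integral>\<^sup>+x \<in> ball 0 (sqrt \<sigma> * r) - ball 0 (r / sqrt \<sigma>). ennreal (dual_weight a b lam x) \<partial>lebesgue)
      in if I = \<infinity> then 0 else (enn2real I / r ^ CARD('n)) powr (1 - lam))"
  by (simp add: hfun_def dual_weight_def)

lemma hfun_eq_0_if_annulus_infinite:
  fixes a b :: "real^'n::finite \<Rightarrow> real"
  assumes "\<sigma> > 1" "r1 > 0" "r1 \<le> r" "r \<le> sqrt \<sigma> * r1"
    and "(\<integral>\<^sup>+x \<in> ball 0 (sqrt \<sigma> * r1) - ball 0 r1. ennreal (dual_weight a b lam x) \<partial>lebesgue) = \<infinity>"
  shows "hfun a b lam \<sigma> r = 0"
proof -
  have "(\<integral>\<^sup>+x \<in> ball 0 (sqrt \<sigma> * r1) - ball 0 r1. ennreal (dual_weight a b lam x) \<partial>lebesgue)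
      \<le> (\<integral>\<^sup>+x \<in> ball 0 (sqrt \<sigma> * r) - ball 0 (r / sqrt \<sigma>). ennreal (dual_weight a b lam x) \<partial>lebesgue)"
    using annulus_subset_scaled_annulus[OF assms(1-4)] by (intro nn_integral_mono) (auto simp: indicator_def)
  then show ?thesis
    using assms(5) by (simp add: hfun_eq_dual_weight top_unique)
qed

lemma hfun_le:
  fixes a b :: "real^'n::finite \<Rightarrow> real"
  assumes "r > 0" "lam > 1" "I0 > 0"
    and I0: "ennreal I0 \<le> (\<integral>\<^sup>+x \<in> ball 0 (sqrt \<sigma> * r) - ball 0 (r / sqrt \<sigma>). ennreal (dual_weight a b lam x) \<partial>lebesgue)"
  shows "hfun a b lam \<sigma> r \<le> I0 powr (1 - lam) * r powr (real CARD('n) * (lam - 1))"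
proof -
  define n where "n = real CARD('n)"
  define I where "I = (\<integral>\<^sup>+x \<in> ball 0 (sqrt \<sigma> * r) - ball 0 (r / sqrt \<sigma>). ennreal (dual_weight a b lam x) \<partial>lebesgue)"
  show ?thesis
  proof (cases "I = \<infinity>")
    case False
    then have "I0 \<le> enn2real I"
      using enn2real_mono[OF I0[folded I_def]] \<open>I0 > 0\<close> by (simp add: top.not_eq_extremum)
    then have "(enn2real I / r ^ CARD('n)) powr (1 - lam) \<le> (I0 / r ^ CARD('n)) powr (1 - lam)"
      using assms by (intro powr_mono2' divide_right_mono) auto
    also have "\<dots> = I0 powr (1 - lam) / r powr (n * (1 - lam))"
      using assms by (simp add: n_def powr_divide powr_realpow[symmetric] powr_powr)
    also have "r powr (n * (1 - lam)) = 1 / r powr (n * (lam - 1))"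
      by (simp add: powr_minus_divide[symmetric] algebra_simps)
    finally show ?thesis
      using False by (simp add: hfun_eq_dual_weight I_def[symmetric] n_def)
  qed (simp add: hfun_eq_dual_weight I_def[symmetric])
qed

lemma weighted_hfun_le:
  fixes a b :: "real^'n::finite \<Rightarrow> real" and m :: nat
  assumes "\<sigma> > 1" "r1 > 0" "r1 \<le> r" "r \<le> sqrt \<sigma> * r1" "lam > 1" "m \<ge> 1" "I0 > 0"
    and I0: "ennreal I0 \<le> (\<integral>\<^sup>+x \<in> ball 0 (sqrt \<sigma> * r1) - ball 0 r1. ennreal (dual_weight a b lam x) \<partial>lebesgue)"
  shows "r powr ((real m - real CARD('n)) * lam + real CARD('n) - 1) * hfun a b lam \<sigma> r
    \<le> I0 powr (1 - lam) * (sqrt \<sigma> * r1) powr (real m * lam - 1)"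
proof -
  define n where "n = real CARD('n)"
  have "r > 0"
    using assms by simp
  have "ennreal I0 \<le> (\<integral>\<^sup>+x \<in> ball 0 (sqrt \<sigma> * r) - ball 0 (r / sqrt \<sigma>). ennreal (dual_weight a b lam x) \<partial>lebesgue)"
    using I0 annulus_subset_scaled_annulus[OF assms(1-4)]
    by (elim order_trans, intro nn_integral_mono) (auto simp: indicator_def)
  from hfun_le[OF \<open>r > 0\<close> assms(5,7) this]
  have "r powr ((real m - n) * lam + n - 1) * hfun a b lam \<sigma> r
      \<le> r powr ((real m - n) * lam + n - 1) * (I0 powr (1 - lam) * r powr (n * (lam - 1)))"
    by (intro mult_left_mono) (simp_all add: n_def)
  also have "\<dots> = I0 powr (1 - lam) * r powr (real m * lam - 1)"
    by (simp add: powr_add[symmetric] algebra_simps)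
  also have "\<dots> \<le> I0 powr (1 - lam) * (sqrt \<sigma> * r1) powr (real m * lam - 1)"
  proof -
    have "real m * lam \<ge> 1"
      using assms by (metis mult_mono' less_imp_le mult_1 of_nat_1 of_nat_le_iff zero_le_one)
    then show ?thesis
      using assms \<open>r > 0\<close> by (intro mult_left_mono powr_mono2) auto
  qed
  finally show ?thesis
    by (simp add: n_def)
qed

lemma weighted_hfun_integral_eq_0:
  fixes a b :: "real^'n::finite \<Rightarrow> real"
  assumes "\<sigma> > 1" "r1 > 0"
    and "(\<integral>\<^sup>+x \<in> ball 0 (sqrt \<sigma> * r1) - ball 0 r1. ennreal (dual_weight a b lam x) \<partial>lebesgue) = \<infinity>"
  shows "(\<integral>\<^sup>+r \<in> {r1..sqrt \<sigma> * r1}. ennreal (r powr e * hfun a b lam \<sigma> r) \<partial>lborel) = 0"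
proof -
  have "(\<integral>\<^sup>+r \<in> {r1..sqrt \<sigma> * r1}. ennreal (r powr e * hfun a b lam \<sigma> r) \<partial>lborel) = (\<integral>\<^sup>+(r::real). 0 \<partial>lborel)"
  proof (rule nn_integral_cong)
    fix r
    show "ennreal (r powr e * hfun a b lam \<sigma> r) * indicator {r1..sqrt \<sigma> * r1} r = 0"
      using hfun_eq_0_if_annulus_infinite[OF assms(1,2) _ _ assms(3), of r] by (auto simp: indicator_def)
  qed
  then show ?thesis
    by simp
qed

lemma weighted_hfun_integral_le:
  fixes a b :: "real^'n::finite \<Rightarrow> real" and m :: nat
  assumes "\<sigma> > 1" "r1 > 0" "lam > 1" "m \<ge> 1" "I0 > 0"
    and "ennreal I0 \<le> (\<integral>\<^sup>+x \<in> ball 0 (sqrt \<sigma> * r1) - ball 0 r1. ennreal (dual_weight a b lam x) \<partial>lebesgue)"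
  shows "(\<integral>\<^sup>+r \<in> {r1..sqrt \<sigma> * r1}.
      ennreal (r powr ((real m - real CARD('n)) * lam + real CARD('n) - 1) * hfun a b lam \<sigma> r) \<partial>lborel)
    \<le> ennreal (I0 powr (1 - lam) * (sqrt \<sigma> * r1) powr (real m * lam - 1) * (sqrt \<sigma> * r1 - r1))"
proof -
  define B where "B = I0 powr (1 - lam) * (sqrt \<sigma> * r1) powr (real m * lam - 1)"
  have "r1 \<le> sqrt \<sigma> * r1"
    using assms by simp
  have "(\<integral>\<^sup>+r \<in> {r1..sqrt \<sigma> * r1}.
      ennreal (r powr ((real m - real CARD('n)) * lam + real CARD('n) - 1) * hfun a b lam \<sigma> r) \<partial>lborel)
      \<le> (\<integral>\<^sup>+r \<in> {r1..sqrt \<sigma> * r1}. ennreal B \<partial>lborel)"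
    using weighted_hfun_le[OF assms(1,2) _ _ assms(3-6)]
    by (intro nn_integral_mono) (auto simp: B_def indicator_def ennreal_leI)
  also have "\<dots> = ennreal (B * (sqrt \<sigma> * r1 - r1))"
    using \<open>r1 \<le> sqrt \<sigma> * r1\<close> by (simp add: nn_integral_cmult_indicator ennreal_mult B_def)
  finally show ?thesis
    by (simp add: B_def)
qed

lemma powr_decrement_ge_annulus_integral:
  fixes aa :: "('n::finite \<Rightarrow> nat) \<Rightarrow> real^'n \<Rightarrow> real \<Rightarrow> real" and a b u :: "real^'n \<Rightarrow> real"
  assumes lam: "lam > 1" and \<sigma>: "\<sigma> > 1" and m: "m \<ge> 1"
    and a: "a \<in> borel_measurable lebesgue" "\<forall>x. a x > 0"
    and b: "b \<in> borel_measurable lebesgue" "\<forall>x. b x > 0"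
    and a_bound: "AE x in lebesgue. \<forall>\<alpha> \<zeta>. mi_order \<alpha> = m \<longrightarrow> \<bar>aa \<alpha> x \<zeta>\<bar> \<le> a x * \<bar>\<zeta>\<bar>"
    and sol: "is_solution m lam aa b u" and r1: "r1 > 0"
    and J: "Jfun b lam u (sqrt \<sigma> * r1) \<le> 2 * Jfun b lam u r1" "Jfun b lam u r1 > 0"
    and M0: "M0 > 0" "\<forall>y::real^'n. (\<Sum>\<alpha> | mi_order \<alpha> = m. \<bar>dalpha \<alpha> (cutoff ((1 + \<sigma>) / 2) 1) y\<bar>) \<le> M0"
    and I0: "I0 \<ge> 0"
      "(\<integral>\<^sup>+x \<in> ball 0 (sqrt \<sigma> * r1) - ball 0 r1. ennreal (dual_weight a b lam x) \<partial>lebesgue) = ennreal I0"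
  shows "I0 > 0"
    and "(lam - 1) * 2 powr (-lam) * I0 powr (1 - lam) / (young_const lam M0 * r1 powr (- real m * lam))
      \<le> Jfun b lam u r1 powr (1 - lam) - Jfun b lam u (sqrt \<sigma> * r1) powr (1 - lam)"
proof -
  define J1 where "J1 = Jfun b lam u r1"
  define J2 where "J2 = Jfun b lam u (sqrt \<sigma> * r1)"
  define M where "M = M0 / r1 ^ m"
  have "M > 0"
    using M0 r1 by (simp add: M_def)
  have "J1 \<le> J2"
    using sol b \<sigma> r1 unfolding J1_def J2_def is_solution_def
    by (intro Jfun_mono) (auto simp: less_imp_le)
  have "sqrt ((1 + \<sigma>) / 2) * r1 < sqrt \<sigma> * r1"
    using \<sigma> r1 by simp
  note test_bound = cutoff_test_bound[OF lam _ a b a_bound sol _ m r1 this M0(2)]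
  have bound: "J1 \<le> M * (t powr lam / lam) * (J2 - J1) + M * (t powr (- (lam/(lam-1))) / (lam/(lam-1))) * I0"
    if "t > 0" for t
    using that \<open>M > 0\<close> \<open>J1 \<le> J2\<close> lam \<sigma> I0(1) test_bound[OF that]
    unfolding I0(2) J1_def[symmetric] J2_def[symmetric] M_def[symmetric]
    by (intro ennreal_le_linear_combination) (auto simp: less_imp_le)
  show "I0 > 0"
    using young_bound_pos[OF _ \<open>M > 0\<close> _ I0(1) lam bound] J \<open>J1 \<le> J2\<close> by (simp add: J1_def)
  have "young_const lam M = young_const lam M0 * r1 powr (- real m * lam)"
    using young_const_mult[OF lam M0(1), of "r1 powr (- real m)"] r1
    by (simp add: M_def powr_minus_divide powr_divide powr_realpow[symmetric] powr_powr)
  then have "J1 powr lam \<le> young_const lam M0 * r1 powr (- real m * lam) * (J2 - J1) * I0 powr (lam - 1)"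
    using young_bound_optimize[OF _ \<open>M > 0\<close> _ \<open>I0 > 0\<close> lam bound] J \<open>J1 \<le> J2\<close> by (simp add: J1_def)
  then show "(lam - 1) * 2 powr (-lam) * I0 powr (1 - lam) / (young_const lam M0 * r1 powr (- real m * lam))
      \<le> Jfun b lam u r1 powr (1 - lam) - Jfun b lam u (sqrt \<sigma> * r1) powr (1 - lam)"
    using decrement_lower_bound[OF _ \<open>J1 \<le> J2\<close> _ lam _ \<open>I0 > 0\<close>] J young_const_pos[OF lam M0(1)] r1
    by (simp add: J1_def J2_def)
qed

lemma rescale_constant_eq:
  fixes s r Y P Q k :: real
  assumes "s > 1" "r > 0" "Y > 0"
  shows "P / (Y * s powr (k - 1) * (s - 1)) * (Q * (s * r) powr (k - 1) * (s * r - r)) = P * Q / (Y * r powr (- k))"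
  using assms by (simp add: powr_mult powr_minus powr_diff field_simps)

lemma powr_decrement_ge_weighted_hfun_integral:
  fixes aa :: "('n::finite \<Rightarrow> nat) \<Rightarrow> real^'n \<Rightarrow> real \<Rightarrow> real" and a b u :: "real^'n \<Rightarrow> real"
  assumes lam: "lam > 1" and \<sigma>: "\<sigma> > 1" and m: "m \<ge> 1"
    and a: "a \<in> borel_measurable lebesgue" "\<forall>x. a x > 0"
    and b: "b \<in> borel_measurable lebesgue" "\<forall>x. b x > 0"
    and a_bound: "AE x in lebesgue. \<forall>\<alpha> \<zeta>. mi_order \<alpha> = m \<longrightarrow> \<bar>aa \<alpha> x \<zeta>\<bar> \<le> a x * \<bar>\<zeta>\<bar>"
    and sol: "is_solution m lam aa b u" and r: "0 < r1" "r2 = sqrt \<sigma> * r1"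
    and J: "Jfun b lam u r2 \<le> 2 * Jfun b lam u r1" "Jfun b lam u r1 > 0"
    and M0: "M0 > 0" "\<forall>y::real^'n. (\<Sum>\<alpha> | mi_order \<alpha> = m. \<bar>dalpha \<alpha> (cutoff ((1 + \<sigma>) / 2) 1) y\<bar>) \<le> M0"
  shows "ennreal (Jfun b lam u r1 powr (1 - lam) - Jfun b lam u r2 powr (1 - lam))
    \<ge> ennreal ((lam - 1) * 2 powr (-lam) / (young_const lam M0 * sqrt \<sigma> powr (real m * lam - 1) * (sqrt \<sigma> - 1)))
      * (\<integral>\<^sup>+r \<in> {r1..r2}.
           ennreal (r powr ((real m - real CARD('n)) * lam + real CARD('n) - 1) * hfun a b lam \<sigma> r) \<partial>lborel)"
proof (cases "(\<integral>\<^sup>+x \<in> ball 0 (sqrt \<sigma> * r1) - ball 0 r1. ennreal (dual_weight a b lam x) \<partial>lebesgue) = \<infinity>")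
  case True
  then show ?thesis
    using weighted_hfun_integral_eq_0[OF \<sigma> r(1) True] r(2) by simp
next
  case False
  define I0 where "I0 = enn2real (\<integral>\<^sup>+x \<in> ball 0 (sqrt \<sigma> * r1) - ball 0 r1. ennreal (dual_weight a b lam x) \<partial>lebesgue)"
  have I0: "I0 \<ge> 0" "(\<integral>\<^sup>+x \<in> ball 0 (sqrt \<sigma> * r1) - ball 0 r1. ennreal (dual_weight a b lam x) \<partial>lebesgue) = ennreal I0"
    using False by (simp_all add: I0_def top.not_eq_extremum)
  note decrement = powr_decrement_ge_annulus_integral[OF lam \<sigma> m a b a_bound sol r(1) J[unfolded r(2)] M0 I0]
  define C where "C = (lam - 1) * 2 powr (-lam) / (young_const lam M0 * sqrt \<sigma> powr (real m * lam - 1) * (sqrt \<sigma> - 1))"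
  have "C \<ge> 0"
    using lam \<sigma> young_const_pos[OF lam M0(1)] by (simp add: C_def)
  have "ennreal C * (\<integral>\<^sup>+r \<in> {r1..r2}.
      ennreal (r powr ((real m - real CARD('n)) * lam + real CARD('n) - 1) * hfun a b lam \<sigma> r) \<partial>lborel)
    \<le> ennreal C * ennreal (I0 powr (1 - lam) * (sqrt \<sigma> * r1) powr (real m * lam - 1) * (sqrt \<sigma> * r1 - r1))"
    using weighted_hfun_integral_le[where a = a and b = b, OF \<sigma> r(1) lam m decrement(1)] I0(2) r(2)
    by (intro mult_left_mono) auto
  also have "\<dots> = ennreal (C * (I0 powr (1 - lam) * (sqrt \<sigma> * r1) powr (real m * lam - 1) * (sqrt \<sigma> * r1 - r1)))"
    using \<open>C \<ge> 0\<close> \<sigma> r by (intro ennreal_mult[symmetric]) auto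
  also have "\<dots> = ennreal ((lam - 1) * 2 powr (-lam) * I0 powr (1 - lam) / (young_const lam M0 * r1 powr (- (real m * lam))))"
    using \<sigma> unfolding C_def
    by (simp only: rescale_constant_eq[OF _ r(1) young_const_pos[OF lam M0(1)]] real_sqrt_gt_1_iff)
  also have "\<dots> \<le> ennreal (Jfun b lam u r1 powr (1 - lam) - Jfun b lam u r2 powr (1 - lam))"
    using decrement(2) r(2) by (simp add: ennreal_leI)
  finally show ?thesis
    unfolding C_def .
qed

theorem lemma3p3:
  fixes m :: nat and lam \<sigma> :: real
  assumes "m \<ge> 1" and "lam > 1" and "\<sigma> > 1"
  shows "\<exists>C>0. \<forall>(aa :: ('n::finite \<Rightarrow> nat) \<Rightarrow> real^'n \<Rightarrow> real \<Rightarrow> real) a b u r1 r2.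
     (b \<in> borel_measurable lebesgue \<and> (\<forall>x. b x > 0) \<and>
      a \<in> borel_measurable lebesgue \<and> (\<forall>x. a x > 0) \<and>
      (AE x in lebesgue. \<forall>\<alpha> \<zeta>. mi_order \<alpha> = m \<longrightarrow> \<bar>aa \<alpha> x \<zeta>\<bar> \<le> a x * \<bar>\<zeta>\<bar>) \<and>
      is_solution m lam aa b u \<and>
      0 < r1 \<and> r1 < r2 \<and> r2 = sqrt \<sigma> * r1 \<and>
      Jfun b lam u r2 \<le> 2 * Jfun b lam u r1 \<and> Jfun b lam u r1 > 0)
     \<longrightarrow> ennreal (Jfun b lam u r1 powr (1 - lam) - Jfun b lam u r2 powr (1 - lam))
         \<ge> ennreal C * (\<integral>\<^sup>+ r \<in> {r1..r2}.
               ennreal (r powr ((real m - real CARD('n)) * lam + real CARD('n) - 1) * hfun a b lam \<sigma> r) \<partial>lborel)"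
proof -
  obtain M0 where M0: "M0 > 0" "\<forall>y::real^'n. (\<Sum>\<alpha> | mi_order \<alpha> = m. \<bar>dalpha \<alpha> (cutoff ((1 + \<sigma>) / 2) 1) y\<bar>) \<le> M0"
    using sum_dalpha_cutoff_bounded[of "(1 + \<sigma>) / 2" m] assms by auto
  define C where "C = (lam - 1) * 2 powr (-lam) / (young_const lam M0 * sqrt \<sigma> powr (real m * lam - 1) * (sqrt \<sigma> - 1))"
  have "C > 0"
    using assms young_const_pos[OF assms(2) M0(1)] by (simp add: C_def)
  moreover note powr_decrement_ge_weighted_hfun_integral[OF assms(2,3,1) _ _ _ _ _ _ _ _ _ _ M0, folded C_def]
  ultimately show ?thesis
    by blast
qed

end
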